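(* Let $G$ be $\mathbb{T}$ or $\mathbb{O}$, and let $R_{ij},R_{ji},R_i,R_j\in SO(3)$ satisfy $$\{R_{ij}^T g R_{ji} : g\in G\}=\{R_i^T g R_j : g\in G\}.$$ Then $$\{\pm R_{ij}^Te_{kl}R_{ji}\}_{k,l=1}^3=\{\pm (v_i^{(k)})^Tv_j^{(l)}\}_{k,l=1}^3,$$ where $v_i^{(k)}$ is the $k$-th row of $R_i$ and $v_j^{(l)}$ is the $l$-th row of $R_j$.
   Context: In the fixed coordinate system, $\mathbb{O}$ is the group of all $3\times3$ signed permutation matrices (exactly one nonzero entry, equal to $\pm1$, in each row and column) of determinant $1$, and $\mathbb{T}\subset\mathbb{O}$ is the 12-element subgroup of matrices $DP$ with $P$ the permutation matrix of an even permutation of $\{1,2,3\}$ and $D$ diagonal with entries $\pm1$, $\det D=1$. For $k,l\in\{1,2,3\}$, $e_{kl}\in\mathbb{R}^{3\times3}$ is the single-entry matrix with $(k,l)$ entry $1$ and all other entries $0$. Rows are treated as $1\times3$ row vectors, so $(v_i^{(k)})^Tv_j^{(l)}$ is a $3\times3$ rank-one matrix. The notation $\{\pm M_{kl}\}_{k,l=1}^3$ denotes the set $\{M_{kl}\}_{k,l}\cup\{-M_{kl}\}_{k,l}$. *)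

theory Defs
  imports "HOL-Analysis.Analysis" "HOL-Library.Numeral_Type"
begin

type_synonym mat3 = "real^3^3"

definition SO3 :: "mat3 set" where
  "SO3 = {R. orthogonal_matrix R \<and> det R = 1}"

definition signed_perm_mat :: "mat3 \<Rightarrow> bool" where
  "signed_perm_mat M \<longleftrightarrow>
     (\<forall>i j. M $ i $ j \<in> {-1, 0, 1}) \<and>
     (\<forall>i. \<exists>!j. M $ i $ j \<noteq> 0) \<and>
     (\<forall>j. \<exists>!i. M $ i $ j \<noteq> 0)"

definition octa_group :: "mat3 set" where
  "octa_group = {M. signed_perm_mat M \<and> det M = 1}"

definition perm_mat :: "(3 \<Rightarrow> 3) \<Rightarrow> mat3" where
  "perm_mat p = (\<chi> i j. if p i = j then 1 else 0)"

definition sign_diag :: "mat3 \<Rightarrow> bool" where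
  "sign_diag D \<longleftrightarrow> (\<forall>i j. i \<noteq> j \<longrightarrow> D $ i $ j = 0) \<and> (\<forall>i. D $ i $ i \<in> {-1, 1}) \<and> det D = 1"

definition tetra_group :: "mat3 set" where
  "tetra_group = {D ** P | D P. sign_diag D \<and>
      (\<exists>p. p permutes (UNIV :: 3 set) \<and> evenperm p \<and> P = perm_mat p)}"

definition e_mat :: "3 \<Rightarrow> 3 \<Rightarrow> mat3" where
  "e_mat k l = (\<chi> a b. if a = k \<and> b = l then 1 else 0)"

definition outer :: "real^3 \<Rightarrow> real^3 \<Rightarrow> mat3" where
  "outer u v = (\<chi> a b. u $ a * v $ b)"

end

theory Submission
  imports Defs
begin

(* With P = R_i R_ij^T and Q = R_ji R_j^T the hypothesis says that g |-> P g Q permutes G.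
   As G contains the identity and consists of signed permutation matrices,
   P g P^T = (P g Q) (P Q)^T has all entries in {-1, 0, 1} for every g in G, in particular
   for the half-turns diag(1,-1,-1), ... and the 3-cycle, which lie in T.  On a row (x, y, z)
   of the orthogonal matrix P the half-turns give 2 x^2 - 1 in {-1, 0, 1}, i.e.
   x^2 in {0, 1/2, 1}, and the 3-cycle gives xy + yz + zx in {-1, 0, 1}, which excludes
   x^2 = 1/2.  So P is a signed permutation matrix, and so is Q^T = P g0 where P g0 Q = 1.
   Hence P^T e_kl Q^T = +-e_ab, i.e. R_i^T e_kl R_j = +-R_ij^T e_ab R_ji; the reverse
   inclusion is symmetric. *)

definition sign_entries :: "real^'n^'m \<Rightarrow> bool" where
  "sign_entries M \<longleftrightarrow> (\<forall>i j. M $ i $ j \<in> {-1, 0, 1})"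

definition signed_unit_rows :: "real^'n^'m \<Rightarrow> bool" where
  "signed_unit_rows M \<longleftrightarrow> (\<forall>i. \<exists>j. \<exists>s\<in>{-1, 1}. M $ i = s *\<^sub>R axis j 1)"

lemma row_matrix_mult_axis:
  fixes A :: "real^'n^'m" and B :: "real^'p^'n"
  assumes "A $ i = s *\<^sub>R axis j 1"
  shows "(A ** B) $ i = s *\<^sub>R B $ j"
proof -
  have "(A ** B) $ i $ k = (\<Sum>l\<in>UNIV. if l = j then s * B $ l $ k else 0)" for k
    unfolding matrix_matrix_mult_def vec_lambda_beta using assms
    by (intro sum.cong) (auto simp: axis_def)
  then show ?thesis by (simp add: vec_eq_iff)
qed

lemma signed_unit_rows_imp_sign_entries:
  assumes "signed_unit_rows M"
  shows "sign_entries M"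
  unfolding sign_entries_def
proof (intro allI)
  fix i k
  obtain j s where "s \<in> {-1, 1}" "M $ i = s *\<^sub>R axis j 1"
    using assms unfolding signed_unit_rows_def by blast
  then show "M $ i $ k \<in> {-1, 0, 1}" by (auto simp: axis_def)
qed

lemma sign_entries_transpose [simp]: "sign_entries (transpose M) \<longleftrightarrow> sign_entries M"
  by (auto simp: sign_entries_def transpose_def)

lemma sign_entries_mult:
  assumes "signed_unit_rows A" "sign_entries B"
  shows "sign_entries (A ** B)"
  unfolding sign_entries_def
proof (intro allI)
  fix i k
  obtain j s where s: "s \<in> {-1, 1}" "A $ i = s *\<^sub>R axis j 1"
    using assms(1) unfolding signed_unit_rows_def by blast
  have "(A ** B) $ i $ k = s * B $ j $ k"
    using s(2) by (simp add: row_matrix_mult_axis)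
  moreover have "B $ j $ k \<in> {-1, 0, 1}"
    using assms(2) by (simp add: sign_entries_def)
  ultimately show "(A ** B) $ i $ k \<in> {-1, 0, 1}"
    using s(1) by auto
qed

lemma signed_unit_rows_mult:
  assumes "signed_unit_rows A" "signed_unit_rows B"
  shows "signed_unit_rows (A ** B)"
  unfolding signed_unit_rows_def
proof
  fix i
  obtain j s where "s \<in> {-1, 1}" "A $ i = s *\<^sub>R axis j 1"
    using assms(1) unfolding signed_unit_rows_def by blast
  moreover obtain k t where "t \<in> {-1, 1}" "B $ j = t *\<^sub>R axis k 1"
    using assms(2) unfolding signed_unit_rows_def by blast
  ultimately have "s * t \<in> {-1, 1}" "(A ** B) $ i = (s * t) *\<^sub>R axis k 1"
    by (auto simp: row_matrix_mult_axis)
  then show "\<exists>k. \<exists>r\<in>{-1, 1}. (A ** B) $ i = r *\<^sub>R axis k 1" by blast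
qed

lemma orthogonal_matrix_row_sum_squares:
  fixes P :: "real^'n^'n"
  assumes "orthogonal_matrix P"
  shows "(\<Sum>j\<in>UNIV. (P $ i $ j)\<^sup>2) = 1"
  using assms
  by (simp add: orthogonal_matrix_orthonormal_rows norm_eq_1 inner_vec_def row_def power2_eq_square)

lemma orthogonal_sign_entries_imp_signed_unit_rows:
  fixes P :: "real^'n^'n"
  assumes "orthogonal_matrix P" "sign_entries P"
  shows "signed_unit_rows P"
  unfolding signed_unit_rows_def
proof
  fix i
  let ?J = "{j. P $ i $ j \<noteq> 0}"
  have sq: "(P $ i $ j)\<^sup>2 = (if j \<in> ?J then 1 else 0)" for j
    using assms(2) unfolding sign_entries_def by (cases "j \<in> ?J") force+
  have "card ?J = 1"
    using orthogonal_matrix_row_sum_squares[OF assms(1), of i]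
    by (simp add: sq sum.If_cases)
  then obtain j where J: "?J = {j}" by (auto simp: card_1_singleton_iff)
  then have "P $ i = P $ i $ j *\<^sub>R axis j 1"
    by (auto simp: vec_eq_iff axis_def)
  moreover have "P $ i $ j \<in> {-1, 1}"
    using J assms(2) by (auto simp: sign_entries_def)
  ultimately show "\<exists>j. \<exists>s\<in>{-1, 1}. P $ i = s *\<^sub>R axis j 1" by blast
qed

lemma transpose_mult_e_mat_mult:
  "transpose X ** e_mat k l ** Y = outer (X $ k) (Y $ l)"
proof -
  have "(transpose X ** e_mat k l) $ a $ b
      = (\<Sum>c\<in>UNIV. if c = k then (if b = l then X $ k $ a else 0) else 0)" for a b
    unfolding matrix_matrix_mult_def transpose_def e_mat_def vec_lambda_beta
    by (intro sum.cong) auto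
  then have "(transpose X ** e_mat k l ** Y) $ a $ b
      = (\<Sum>c\<in>UNIV. if c = l then X $ k $ a * Y $ c $ b else 0)" for a b
    unfolding matrix_matrix_mult_def[of "transpose X ** e_mat k l"] vec_lambda_beta
    by (intro sum.cong) auto
  then show ?thesis by (simp add: vec_eq_iff outer_def)
qed

lemma outer_scaleR_axis:
  "outer (s *\<^sub>R axis a 1) (t *\<^sub>R axis b 1) = (s * t) *\<^sub>R e_mat a b"
  by (simp add: vec_eq_iff outer_def e_mat_def axis_def)

lemma perm_mat_row: "perm_mat p $ i = axis (p i) 1"
  by (auto simp: vec_eq_iff perm_mat_def axis_def)

lemma sign_diag_mult_perm_mat_row:
  assumes "sign_diag D"
  shows "(D ** perm_mat p) $ i = D $ i $ i *\<^sub>R axis (p i) 1"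
proof -
  have "D $ i = D $ i $ i *\<^sub>R axis i 1"
    using assms by (auto simp: sign_diag_def vec_eq_iff axis_def)
  then show ?thesis
    by (simp add: row_matrix_mult_axis perm_mat_row)
qed

lemma det_perm_mat:
  assumes "p permutes UNIV"
  shows "det (perm_mat p) = of_int (sign p)"
proof -
  have "perm_mat p = (\<chi> i. mat 1 $ p i)"
    by (simp add: perm_mat_def mat_def vec_eq_iff)
  with det_permute_rows[OF assms, of "mat 1"] show ?thesis
    by (simp only: det_I mult_1_right)
qed

lemma tetra_group_subset_octa_group: "tetra_group \<subseteq> octa_group"
proof
  fix g assume "g \<in> tetra_group"
  then obtain D p where g: "g = D ** perm_mat p" "sign_diag D" "p permutes UNIV" "evenperm p"
    unfolding tetra_group_def by blast
  have row: "g $ i $ j = (if j = p i then D $ i $ i else 0)" for i j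
    using sign_diag_mult_perm_mat_row[OF g(2), of p i] by (simp add: g(1) axis_def)
  have diag: "D $ i $ i \<in> {-1, 1}" for i
    using g(2) by (simp add: sign_diag_def)
  have nonzero: "g $ i $ j \<noteq> 0 \<longleftrightarrow> j = p i" for i j
    using diag[of i] by (auto simp: row)
  have "j = p i \<longleftrightarrow> i = inv p j" for i j
    using g(3) by (metis permutes_inverses(1,2))
  then have "\<exists>!i. g $ i $ j \<noteq> 0" for j
    by (simp add: nonzero)
  moreover have "\<exists>!j. g $ i $ j \<noteq> 0" for i
    by (simp add: nonzero)
  moreover have "g $ i $ j \<in> {-1, 0, 1}" for i j
    using diag[of i] by (auto simp: row)
  moreover have "det g = 1"
    using g by (simp add: det_mul det_perm_mat sign_diag_def sign_def)
  ultimately show "g \<in> octa_group"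
    by (simp add: octa_group_def signed_perm_mat_def)
qed

lemma octa_group_signed_unit_rows:
  assumes "g \<in> octa_group"
  shows "signed_unit_rows g"
  unfolding signed_unit_rows_def
proof
  fix i
  have entries: "g $ i $ k \<in> {-1, 0, 1}" and "\<exists>!j. g $ i $ j \<noteq> 0" for k
    using assms by (simp_all add: octa_group_def signed_perm_mat_def)
  then obtain j where j: "g $ i $ j \<noteq> 0" "\<And>k. g $ i $ k \<noteq> 0 \<Longrightarrow> k = j"
    by blast
  have "g $ i $ j \<in> {-1, 1}"
    using entries[of j] j(1) by simp
  moreover have "g $ i = g $ i $ j *\<^sub>R axis j 1"
    using j(2) by (auto simp: vec_eq_iff axis_def)
  ultimately show "\<exists>j. \<exists>s\<in>{-1, 1}. g $ i = s *\<^sub>R axis j 1" by blast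
qed

lemma tetra_groupI:
  "sign_diag D \<Longrightarrow> p permutes UNIV \<Longrightarrow> evenperm p \<Longrightarrow> D ** perm_mat p \<in> tetra_group"
  unfolding tetra_group_def by blast

lemma perm_mat_id: "perm_mat id = mat 1"
  by (simp add: perm_mat_def mat_def vec_eq_iff)

lemma sign_diag_in_tetra_group: "sign_diag D \<Longrightarrow> D \<in> tetra_group"
  using tetra_groupI[of D id] by (simp add: permutes_id perm_mat_id)

lemma sign_diag_mat_1: "sign_diag (mat 1)"
  unfolding sign_diag_def det_I by (simp add: mat_def)

lemma perm_mat_in_tetra_group:
  "p permutes UNIV \<Longrightarrow> evenperm p \<Longrightarrow> perm_mat p \<in> tetra_group"
  using tetra_groupI[OF sign_diag_mat_1] by (metis matrix_mul_lid)

definition half_turn :: "3 \<Rightarrow> mat3" where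
  "half_turn k = (\<chi> i j. if i = j then (if i = k then 1 else -1) else 0)"

definition cycle3 :: "3 \<Rightarrow> 3" where
  "cycle3 = Transposition.transpose 1 2 \<circ> Transposition.transpose 2 3"

lemma cycle3_simps [simp]: "cycle3 1 = 2" "cycle3 2 = 3" "cycle3 3 = 1"
  by (simp_all add: cycle3_def Transposition.transpose_def)

lemma cycle3_permutes: "cycle3 permutes UNIV"
  unfolding cycle3_def by (intro permutes_compose permutes_swap_id) auto

lemma evenperm_cycle3: "evenperm cycle3"
  unfolding cycle3_def by (subst evenperm_comp) (simp_all add: evenperm_swap permutation_swap_id)

lemma sign_diag_half_turn: "sign_diag (half_turn k)"
  using exhaust_3[of k] by (auto simp: sign_diag_def half_turn_def det_3)

lemma diag_conjugate:
  "(P ** X ** transpose P) $ a $ a = (\<Sum>c\<in>UNIV. \<Sum>b\<in>UNIV. P $ a $ b * X $ b $ c * P $ a $ c)"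
  by (simp add: matrix_matrix_mult_def transpose_def sum_distrib_right)

lemma unit_row_coordinate_in_signs:
  fixes x y z :: real
  assumes "x\<^sup>2 + y\<^sup>2 + z\<^sup>2 = 1" "2 * x\<^sup>2 - 1 \<in> {-1, 0, 1}" "2 * y\<^sup>2 - 1 \<in> {-1, 0, 1}"
    "2 * z\<^sup>2 - 1 \<in> {-1, 0, 1}" "x * y + y * z + z * x \<in> {-1, 0, 1}"
  shows "x \<in> {-1, 0, 1}"
proof -
  have halves: "t\<^sup>2 \<in> {0, 1/2, 1}" if "2 * t\<^sup>2 - 1 \<in> {-1, 0, 1}" for t :: real
    using that by auto
  have "x\<^sup>2 \<noteq> 1/2"
  proof
    assume x: "x\<^sup>2 = 1/2"
    with assms(1) halves[OF assms(3)] halves[OF assms(4)]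
    have yz: "y * z = 0" "y\<^sup>2 + z\<^sup>2 = 1/2" by auto
    have "x * y + y * z + z * x = x * (y + z)"
      using yz(1) by (simp add: algebra_simps)
    then have "(x * y + y * z + z * x)\<^sup>2 = (x * (y + z))\<^sup>2"
      by simp
    also have "\<dots> = x\<^sup>2 * (y\<^sup>2 + z\<^sup>2)"
      using yz(1) by (simp add: power_mult_distrib power2_sum)
    also have "\<dots> = 1/4"
      by (simp add: x yz(2))
    finally have "(x * y + y * z + z * x)\<^sup>2 = 1/4" .
    with assms(5) show False by auto
  qed
  with halves[OF assms(2)] have "x\<^sup>2 \<in> {0, 1}" by auto
  then show ?thesis
    by (auto simp: power2_eq_1_iff)
qed

lemma diag_conjugate_half_turn:
  assumes "orthogonal_matrix P"
  shows "(P ** half_turn k ** transpose P) $ a $ a = 2 * (P $ a $ k)\<^sup>2 - 1"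
  using orthogonal_matrix_row_sum_squares[OF assms, of a] exhaust_3[of k]
  by (auto simp: diag_conjugate sum_3 half_turn_def power2_eq_square)

lemma diag_conjugate_cycle3:
  "(P ** perm_mat cycle3 ** transpose P) $ a $ a
     = P $ a $ 1 * P $ a $ 2 + P $ a $ 2 * P $ a $ 3 + P $ a $ 3 * P $ a $ 1"
  by (simp add: diag_conjugate sum_3 perm_mat_def algebra_simps)

lemma sign_entries_if_tetra_conjugates:
  assumes "orthogonal_matrix P"
    and "\<And>g. g \<in> tetra_group \<Longrightarrow> sign_entries (P ** g ** transpose P)"
  shows "sign_entries P"
  unfolding sign_entries_def
proof (intro allI)
  fix a k
  let ?x = "P $ a $ 1" and ?y = "P $ a $ 2" and ?z = "P $ a $ 3"
  have norm: "?x\<^sup>2 + ?y\<^sup>2 + ?z\<^sup>2 = 1"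
    using orthogonal_matrix_row_sum_squares[OF assms(1), of a] by (simp add: sum_3)
  have "2 * (P $ a $ k)\<^sup>2 - 1 \<in> {-1, 0, 1}" for k
    using assms(2)[OF sign_diag_in_tetra_group[OF sign_diag_half_turn]]
    by (simp add: sign_entries_def diag_conjugate_half_turn[OF assms(1), symmetric])
  moreover have "?x * ?y + ?y * ?z + ?z * ?x \<in> {-1, 0, 1}"
    using assms(2)[OF perm_mat_in_tetra_group[OF cycle3_permutes evenperm_cycle3]]
    by (simp add: sign_entries_def diag_conjugate_cycle3[symmetric])
  ultimately have "?x \<in> {-1, 0, 1}" "?y \<in> {-1, 0, 1}" "?z \<in> {-1, 0, 1}"
    using norm unit_row_coordinate_in_signs[of ?x ?y ?z] unit_row_coordinate_in_signs[of ?y ?z ?x]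
      unit_row_coordinate_in_signs[of ?z ?x ?y] by (simp_all add: algebra_simps)
  then show "P $ a $ k \<in> {-1, 0, 1}"
    using exhaust_3[of k] by auto
qed

lemma image_frame_change_self:
  fixes A B C D :: "real^'n^'n"
  assumes "orthogonal_matrix C" "orthogonal_matrix D"
    and "(\<lambda>g. transpose A ** g ** B) ` G = (\<lambda>g. transpose C ** g ** D) ` G"
  shows "(\<lambda>g. (C ** transpose A) ** g ** (B ** transpose D)) ` G = G"
proof -
  have "(\<lambda>h. C ** h ** transpose D) ` (\<lambda>g. transpose A ** g ** B) ` G
      = (\<lambda>h. C ** h ** transpose D) ` (\<lambda>g. transpose C ** g ** D) ` G"
    using assms(3) by simp
  moreover have "C ** (transpose C ** g ** D) ** transpose D = g" for g
    using assms(1,2) by (simp add: matrix_mul_assoc orthogonal_matrix_def)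
      (simp add: matrix_mul_assoc[symmetric])
  ultimately show ?thesis
    by (simp add: image_image matrix_mul_assoc)
qed

lemma conjugate_sign_entries:
  fixes P Q :: "real^'n^'n"
  assumes "orthogonal_matrix Q" "(\<lambda>g. P ** g ** Q) ` G = G" "mat 1 \<in> G"
    and "\<And>h. h \<in> G \<Longrightarrow> signed_unit_rows h" "g \<in> G"
  shows "sign_entries (P ** g ** transpose P)"
proof -
  have "P ** g ** Q \<in> G" "P ** mat 1 ** Q \<in> G"
    using assms(2,3,5) by blast+
  then have "sign_entries ((P ** g ** Q) ** transpose (P ** mat 1 ** Q))"
    using assms(4) by (simp add: sign_entries_mult signed_unit_rows_imp_sign_entries)
  moreover have "(P ** g ** Q) ** transpose (P ** mat 1 ** Q) = P ** g ** transpose P"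
    using assms(1)
    by (simp add: matrix_transpose_mul matrix_mul_assoc orthogonal_matrix_def)
      (simp add: matrix_mul_assoc[symmetric])
  ultimately show ?thesis by simp
qed

lemma signed_unit_rows_if_permutes_group:
  assumes "G = tetra_group \<or> G = octa_group"
    and "orthogonal_matrix P" "orthogonal_matrix Q" "(\<lambda>g. P ** g ** Q) ` G = G"
  shows "signed_unit_rows P" "signed_unit_rows (transpose Q)"
proof -
  have G: "tetra_group \<subseteq> G" "G \<subseteq> octa_group"
    using assms(1) tetra_group_subset_octa_group by auto
  have units: "signed_unit_rows h" if "h \<in> G" for h
    using G(2) that octa_group_signed_unit_rows by blast
  have one: "mat 1 \<in> G"
    using G(1) sign_diag_in_tetra_group[OF sign_diag_mat_1] by blast
  have "sign_entries P"
    using sign_entries_if_tetra_conjugates[OF assms(2)]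
      conjugate_sign_entries[OF assms(3,4) one units] G(1)
    by blast
  then show rows_P: "signed_unit_rows P"
    by (rule orthogonal_sign_entries_imp_signed_unit_rows[OF assms(2)])
  have "mat 1 \<in> (\<lambda>g. P ** g ** Q) ` G"
    using one by (simp only: assms(4))
  then obtain g0 where g0: "mat 1 = P ** g0 ** Q" "g0 \<in> G"
    by (rule imageE)
  have "P ** g0 = (P ** g0 ** Q) ** transpose Q"
    using assms(3) by (simp add: matrix_mul_assoc[symmetric] orthogonal_matrix_def)
  then have "transpose Q = P ** g0"
    by (simp add: g0(1)[symmetric])
  then show "signed_unit_rows (transpose Q)"
    using signed_unit_rows_mult[OF rows_P units[OF g0(2)]] by simp
qed

lemma transpose_mult_e_mat_mult_signed_unit_rows:
  assumes "signed_unit_rows P" "signed_unit_rows M"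
  shows "\<exists>s a b. s \<in> {1, -1} \<and> transpose P ** e_mat k l ** M = s *\<^sub>R e_mat a b"
proof -
  obtain a s where a: "s \<in> {-1, 1}" "P $ k = s *\<^sub>R axis a 1"
    using assms(1) unfolding signed_unit_rows_def by blast
  obtain b t where b: "t \<in> {-1, 1}" "M $ l = t *\<^sub>R axis b 1"
    using assms(2) unfolding signed_unit_rows_def by blast
  have "transpose P ** e_mat k l ** M = (s * t) *\<^sub>R e_mat a b"
    by (simp only: transpose_mult_e_mat_mult a(2) b(2) outer_scaleR_axis)
  moreover have "s * t \<in> {1, -1}"
    using a(1) b(1) by auto
  ultimately show ?thesis by blast
qed

lemma e_mat_frame_change:
  assumes "G = tetra_group \<or> G = octa_group"
    and "orthogonal_matrix A" "orthogonal_matrix B" "orthogonal_matrix C" "orthogonal_matrix D"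
    and "(\<lambda>g. transpose A ** g ** B) ` G = (\<lambda>g. transpose C ** g ** D) ` G"
  shows "\<exists>s a b. s \<in> {1, -1} \<and>
           transpose C ** e_mat k l ** D = s *\<^sub>R (transpose A ** e_mat a b ** B)"
proof -
  define P Q where "P = C ** transpose A" and "Q = B ** transpose D"
  have "orthogonal_matrix P" "orthogonal_matrix Q"
    using assms(2-5) by (simp_all add: P_def Q_def orthogonal_matrix_mul)
  moreover have "(\<lambda>g. P ** g ** Q) ` G = G"
    unfolding P_def Q_def by (rule image_frame_change_self[OF assms(4-6)])
  ultimately obtain s a b where s: "s \<in> {1, -1}"
    and PQ: "transpose P ** e_mat k l ** transpose Q = s *\<^sub>R e_mat a b"
    using transpose_mult_e_mat_mult_signed_unit_rows signed_unit_rows_if_permutes_group[OF assms(1)]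
    by metis
  have "transpose A ** transpose P = (transpose A ** A) ** transpose C"
    by (simp add: P_def matrix_transpose_mul matrix_mul_assoc)
  moreover have "transpose Q ** B = D ** (transpose B ** B)"
    by (simp add: Q_def matrix_transpose_mul matrix_mul_assoc)
  ultimately have AP: "transpose A ** transpose P = transpose C" and QB: "transpose Q ** B = D"
    using assms(2,3) by (simp_all add: orthogonal_matrix_def)
  have "transpose C ** e_mat k l ** D
      = (transpose A ** transpose P) ** e_mat k l ** (transpose Q ** B)"
    by (simp only: AP QB)
  also have "\<dots> = transpose A ** (transpose P ** e_mat k l ** transpose Q) ** B"
    by (simp add: matrix_mul_assoc)
  also have "\<dots> = s *\<^sub>R (transpose A ** e_mat a b ** B)"
    by (simp add: PQ matrix_scalar_ac scalar_matrix_assoc)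
  finally show ?thesis
    using s by blast
qed

definition signed_frame :: "mat3 \<Rightarrow> mat3 \<Rightarrow> mat3 set" where
  "signed_frame A B = {s *\<^sub>R (transpose A ** e_mat k l ** B) | s k l. s \<in> {1, -1}}"

lemma signed_frame_subset:
  assumes "G = tetra_group \<or> G = octa_group"
    and "orthogonal_matrix A" "orthogonal_matrix B" "orthogonal_matrix C" "orthogonal_matrix D"
    and "(\<lambda>g. transpose A ** g ** B) ` G = (\<lambda>g. transpose C ** g ** D) ` G"
  shows "signed_frame C D \<subseteq> signed_frame A B"
proof
  fix x assume "x \<in> signed_frame C D"
  then obtain s k l where x: "s \<in> {1, -1}" "x = s *\<^sub>R (transpose C ** e_mat k l ** D)"
    unfolding signed_frame_def by blast
  obtain r a b where "r \<in> {1, -1}"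
    and "transpose C ** e_mat k l ** D = r *\<^sub>R (transpose A ** e_mat a b ** B)"
    using e_mat_frame_change[OF assms] by blast
  with x have "s * r \<in> {1, -1}" "x = (s * r) *\<^sub>R (transpose A ** e_mat a b ** B)"
    by auto
  then show "x \<in> signed_frame A B"
    unfolding signed_frame_def by blast
qed

theorem proposition4:
  fixes G :: "mat3 set" and Rij Rji Ri Rj :: mat3
  assumes "G = tetra_group \<or> G = octa_group"
    and "Rij \<in> SO3" "Rji \<in> SO3" "Ri \<in> SO3" "Rj \<in> SO3"
    and "(\<lambda>g. transpose Rij ** g ** Rji) ` G = (\<lambda>g. transpose Ri ** g ** Rj) ` G"
  shows "{s *\<^sub>R (transpose Rij ** e_mat k l ** Rji) | s k l. s \<in> {1, -1}}
       = {s *\<^sub>R outer (Ri $ k) (Rj $ l) | s k l. s \<in> {1, -1}}"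
proof -
  have orth: "orthogonal_matrix Rij" "orthogonal_matrix Rji"
    "orthogonal_matrix Ri" "orthogonal_matrix Rj"
    using assms(2-5) by (simp_all add: SO3_def)
  have "signed_frame Rij Rji = signed_frame Ri Rj"
    using signed_frame_subset[OF assms(1) orth assms(6)]
      signed_frame_subset[OF assms(1) orth(3,4,1,2) assms(6)[symmetric]] by blast
  then show ?thesis
    by (simp add: signed_frame_def transpose_mult_e_mat_mult)
qed

end
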